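(* Let $a<b$ be real numbers, $J=(a,b)\times 0\subset\mathbb{R}^2$, $N=J\cup\mathbb{R}\times(0,+\infty)$, and let $U$ be an open neighborhood of $J$ in $N$. Then there exists a half open trapezoid $T\subset U$ with base $J$.
   Context: For $c<d$ and continuous $\alpha,\beta:(c,d]\to\mathbb{R}$ with $\alpha(y)<\beta(y)$ for all $y$, the set $T=\{(x,y)\in\mathbb{R}^2:\alpha(y)\le x\le\beta(y),\ c<y\le d\}$ is a half open trapezoid. If the (finite or infinite) limits $\lim_{y\to c+0}\alpha(y)=a'$ and $\lim_{y\to c+0}\beta(y)=b'$ exist with $a'<b'$, then $(a',b')\times c$ is called the (lower) base of $T$. *)

theory Defs
  imports "HOL-Analysis.Analysis"
begin

definition trapezoid_set :: "real \<Rightarrow> real \<Rightarrow> (real \<Rightarrow> real) \<Rightarrow> (real \<Rightarrow> real) \<Rightarrow> (real \<times> real) set" where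
  "trapezoid_set c d \<alpha> \<beta> = {(x, y). \<alpha> y \<le> x \<and> x \<le> \<beta> y \<and> c < y \<and> y \<le> d}"

definition half_open_trapezoid ::
  "(real \<times> real) set \<Rightarrow> real \<Rightarrow> real \<Rightarrow> (real \<Rightarrow> real) \<Rightarrow> (real \<Rightarrow> real) \<Rightarrow> bool" where
  "half_open_trapezoid T c d \<alpha> \<beta> \<longleftrightarrow>
     c < d \<and> continuous_on {c<..d} \<alpha> \<and> continuous_on {c<..d} \<beta> \<and>
     (\<forall>y\<in>{c<..d}. \<alpha> y < \<beta> y) \<and> T = trapezoid_set c d \<alpha> \<beta>"

text \<open>The (lower) base of T is the open segment (a',b') x {c} with finite a' < b'
  (only finite bases are needed here).\<close>
definition has_base ::
  "real \<Rightarrow> (real \<Rightarrow> real) \<Rightarrow> (real \<Rightarrow> real) \<Rightarrow> (real \<times> real) set \<Rightarrow> bool" where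
  "has_base c \<alpha> \<beta> B \<longleftrightarrow>
     (\<exists>a' b'. a' < b' \<and> (\<alpha> \<longlongrightarrow> a') (at_right c) \<and> (\<beta> \<longlongrightarrow> b') (at_right c)
        \<and> B = {a'<..<b'} \<times> {c})"

end

theory Submission
  imports Defs
begin

text \<open>Let \<open>q x\<close> be the distance from \<open>(x, 0)\<close> to the complement of \<open>U\<close>; it is Lipschitz
  and positive on \<open>(a, b)\<close>. Its infimum \<open>D t\<close> over the shrunk interval \<open>[a + t, b - t]\<close> is
  continuous, nondecreasing and positive for \<open>t > 0\<close>, so \<open>E t = t D t / (b - a)\<close> is a
  homeomorphism of some \<open>[0, t\<^sub>0]\<close> onto \<open>[0, d]\<close> with \<open>E t < D t\<close>. With \<open>\<theta> = E\<inverse>\<close>, the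
  trapezoid \<open>a + \<theta> y \<le> x \<le> b - \<theta> y\<close>, \<open>0 < y \<le> d\<close>, consists of points with
  \<open>y = E t < D t \<le> q x\<close> for \<open>t = \<theta> y\<close>, and therefore lies in \<open>U\<close>.\<close>

lemma continuous_mono_on_image_Icc:
  fixes f :: "real \<Rightarrow> real"
  assumes "s \<le> t" "continuous_on {s..t} f" "mono_on {s..t} f"
  shows "f ` {s..t} = {f s..f t}"
proof
  show "f ` {s..t} \<subseteq> {f s..f t}"
    using assms(1,3) by (auto intro!: mono_onD[OF assms(3)])
  show "{f s..f t} \<subseteq> f ` {s..t}"
  proof
    fix y assume "y \<in> {f s..f t}"
    then obtain x where "s \<le> x" "x \<le> t" "f x = y"
      using IVT'[of f s y t] assms(1,2) by auto
    then show "y \<in> f ` {s..t}" by auto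
  qed
qed

lemma continuous_strict_mono_on_inverse_Icc:
  fixes f :: "real \<Rightarrow> real"
  assumes "s \<le> t" "continuous_on {s..t} f" "strict_mono_on {s..t} f"
  obtains g where "continuous_on {f s..f t} g" "g (f s) = s"
    "\<And>y. y \<in> {f s..f t} \<Longrightarrow> g y \<in> {s..t} \<and> f (g y) = y"
proof
  have inj: "inj_on f {s..t}" using assms(3) by (rule strict_mono_on_imp_inj_on)
  have img: "f ` {s..t} = {f s..f t}"
    using continuous_mono_on_image_Icc[OF assms(1,2) strict_mono_on_imp_mono_on[OF assms(3)]] .
  show "continuous_on {f s..f t} (the_inv_into {s..t} f)"
    unfolding img[symmetric] by (rule continuous_on_inv_into[OF assms(2) compact_Icc inj])
  show "the_inv_into {s..t} f (f s) = s" using assms(1) by (simp add: the_inv_into_f_f[OF inj])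
  show "the_inv_into {s..t} f y \<in> {s..t} \<and> f (the_inv_into {s..t} f y) = y"
    if "y \<in> {f s..f t}" for y
    using that inj unfolding img[symmetric] by (auto simp: the_inv_into_f_f)
qed

definition shrunk_Inf :: "(real \<Rightarrow> real) \<Rightarrow> real \<Rightarrow> real \<Rightarrow> real \<Rightarrow> real" where
  "shrunk_Inf q a b t = Inf (q ` {a + t..b - t})"

context
  fixes q :: "real \<Rightarrow> real" and a b L :: real
  assumes lipschitz: "L-lipschitz_on {a..b} q"
begin

lemma shrunk_Inf_le:
  assumes "0 \<le> t" "u \<in> {a + t..b - t}"
  shows "shrunk_Inf q a b t \<le> q u"
proof -
  have "continuous_on {a + t..b - t} q"
    using assms(1) by (intro continuous_on_subset[OF lipschitz_on_continuous_on[OF lipschitz]]) auto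
  then have "bdd_below (q ` {a + t..b - t})"
    by (intro bounded_imp_bdd_below compact_imp_bounded compact_continuous_image) auto
  then show ?thesis
    unfolding shrunk_Inf_def using assms(2) by (rule cINF_lower)
qed

lemma shrunk_Inf_greatest:
  assumes "a + t \<le> b - t" "\<And>u. u \<in> {a + t..b - t} \<Longrightarrow> m \<le> q u"
  shows "m \<le> shrunk_Inf q a b t"
  unfolding shrunk_Inf_def using assms by (intro cINF_greatest) auto

lemma shrunk_Inf_mono:
  assumes "0 \<le> t" "t \<le> t'" "t' \<le> (b - a) / 2"
  shows "shrunk_Inf q a b t \<le> shrunk_Inf q a b t'"
  using assms by (intro shrunk_Inf_greatest shrunk_Inf_le) auto

lemma shrunk_Inf_pos:
  assumes "0 < t" "t \<le> (b - a) / 2" and pos: "\<And>u. u \<in> {a<..<b} \<Longrightarrow> 0 < q u"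
  shows "0 < shrunk_Inf q a b t"
proof -
  have "continuous_on {a + t..b - t} q"
    using assms(1) by (intro continuous_on_subset[OF lipschitz_on_continuous_on[OF lipschitz]]) auto
  moreover have "{a + t..b - t} \<noteq> {}" using assms(2) by simp
  ultimately obtain u where u: "u \<in> {a + t..b - t}" "\<And>v. v \<in> {a + t..b - t} \<Longrightarrow> q u \<le> q v"
    using continuous_attains_inf[of "{a + t..b - t}" q] by auto
  have "0 < q u" using u(1) assms(1) by (intro pos) auto
  also have "q u \<le> shrunk_Inf q a b t"
    using assms(2) u(2) by (intro shrunk_Inf_greatest) auto
  finally show ?thesis .
qed

lemma lipschitz_on_shrunk_Inf: "L-lipschitz_on {0..(b - a) / 2} (shrunk_Inf q a b)"
proof (rule lipschitz_onI)
  show "0 \<le> L" using lipschitz by (rule lipschitz_on_nonneg)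
  have le: "shrunk_Inf q a b t \<le> shrunk_Inf q a b t' + L * \<bar>t - t'\<bar>"
    if "t \<in> {0..(b - a) / 2}" "t' \<in> {0..(b - a) / 2}" for t t'
  proof -
    have "shrunk_Inf q a b t - L * \<bar>t - t'\<bar> \<le> shrunk_Inf q a b t'"
    proof (rule shrunk_Inf_greatest)
      show "a + t' \<le> b - t'" using that by auto
      fix u' assume u': "u' \<in> {a + t'..b - t'}"
      define u where "u = max (a + t) (min (b - t) u')"
      have u: "u \<in> {a + t..b - t}" "\<bar>u - u'\<bar> \<le> \<bar>t - t'\<bar>"
        using that u' by (auto simp: u_def)
      have "shrunk_Inf q a b t \<le> q u"
        using that u(1) by (intro shrunk_Inf_le) auto
      also have "q u \<le> q u' + L * \<bar>u - u'\<bar>"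
        using lipschitz_onD[OF lipschitz, of u u'] that u(1) u' by (auto simp: dist_real_def)
      also have "L * \<bar>u - u'\<bar> \<le> L * \<bar>t - t'\<bar>"
        using u(2) \<open>0 \<le> L\<close> by (rule mult_left_mono)
      finally show "shrunk_Inf q a b t - L * \<bar>t - t'\<bar> \<le> q u'" by simp
    qed
    then show ?thesis by simp
  qed
  fix t t' assume "t \<in> {0..(b - a) / 2}" "t' \<in> {0..(b - a) / 2}"
  then show "dist (shrunk_Inf q a b t) (shrunk_Inf q a b t') \<le> L * dist t t'"
    using le[of t t'] le[of t' t] by (auto simp: dist_real_def abs_minus_commute)
qed

end

lemma shrinking_profile_exists:
  fixes q :: "real \<Rightarrow> real"
  assumes "a < b" "L-lipschitz_on {a..b} q" "\<And>u. u \<in> {a<..<b} \<Longrightarrow> 0 < q u"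
  obtains d \<theta> where "0 < d" "continuous_on {0..d} \<theta>" "\<theta> 0 = 0"
    "\<And>y. y \<in> {0..d} \<Longrightarrow> \<theta> y < (b - a) / 2"
    "\<And>x y. y \<in> {0<..d} \<Longrightarrow> x \<in> {a + \<theta> y..b - \<theta> y} \<Longrightarrow> y < q x"
proof -
  define D where "D = shrunk_Inf q a b"
  define t\<^sub>0 where "t\<^sub>0 = (b - a) / 4"
  define E where "E t = t * D t / (b - a)" for t
  have t\<^sub>0: "0 < t\<^sub>0" "t\<^sub>0 < (b - a) / 2" using assms(1) by (auto simp: t\<^sub>0_def)
  have D_pos: "0 < D t" if "0 < t" "t \<le> t\<^sub>0" for t
    unfolding D_def using that t\<^sub>0 by (intro shrunk_Inf_pos[OF assms(2)] assms(3)) auto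
  have E_cont: "continuous_on {0..t\<^sub>0} E"
  proof -
    have "continuous_on {0..t\<^sub>0} D"
      unfolding D_def using t\<^sub>0
      by (intro continuous_on_subset[OF lipschitz_on_continuous_on,
            OF lipschitz_on_shrunk_Inf[OF assms(2)]]) auto
    then show ?thesis unfolding E_def by (intro continuous_intros) (use assms(1) in auto)
  qed
  have E_strict_mono: "strict_mono_on {0..t\<^sub>0} E"
  proof (rule strict_mono_onI)
    fix t t' assume "t \<in> {0..t\<^sub>0}" "t' \<in> {0..t\<^sub>0}" "t < t'"
    then have "t * D t \<le> t * D t'"
      unfolding D_def using t\<^sub>0 by (intro mult_left_mono shrunk_Inf_mono[OF assms(2)]) auto
    also have "\<dots> < t' * D t'"
      using D_pos[of t'] \<open>t < t'\<close> \<open>t \<in> {0..t\<^sub>0}\<close> \<open>t' \<in> {0..t\<^sub>0}\<close> by (intro mult_strict_right_mono) auto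
    finally show "E t < E t'" unfolding E_def using assms(1) by (simp add: divide_strict_right_mono)
  qed
  have E0: "E 0 = 0" by (simp add: E_def)
  obtain \<theta> where \<theta>: "continuous_on {0..E t\<^sub>0} \<theta>" "\<theta> 0 = 0"
    "\<And>y. y \<in> {0..E t\<^sub>0} \<Longrightarrow> \<theta> y \<in> {0..t\<^sub>0} \<and> E (\<theta> y) = y"
    using continuous_strict_mono_on_inverse_Icc[OF _ E_cont E_strict_mono] t\<^sub>0 E0
    by (metis less_imp_le)
  show ?thesis
  proof
    show "0 < E t\<^sub>0" using strict_mono_onD[OF E_strict_mono, of 0 t\<^sub>0] t\<^sub>0 E0 by simp
    show "continuous_on {0..E t\<^sub>0} \<theta>" "\<theta> 0 = 0" by (fact \<theta>)+
    show "\<theta> y < (b - a) / 2" if "y \<in> {0..E t\<^sub>0}" for y using \<theta>(3)[OF that] t\<^sub>0 by simp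
    fix x y assume y: "y \<in> {0<..E t\<^sub>0}" and x: "x \<in> {a + \<theta> y..b - \<theta> y}"
    define t where "t = \<theta> y"
    have t: "t \<in> {0..t\<^sub>0}" "E t = y" using \<theta>(3)[of y] y by (auto simp: t_def)
    with y E0 have "0 < t" by (cases "t = 0") auto
    have "y = t / (b - a) * D t" using t(2) by (simp add: E_def)
    also have "\<dots> < D t"
    proof -
      have "t / (b - a) < 1" using t(1) t\<^sub>0 by simp
      then show ?thesis
        using mult_strict_right_mono[of "t / (b - a)" 1 "D t"] D_pos \<open>0 < t\<close> t(1) by simp
    qed
    also have "D t \<le> q x"
      unfolding D_def using t(1) x by (intro shrunk_Inf_le[OF assms(2)]) (auto simp: t_def)
    finally show "y < q x" .
  qed
qed

lemma trapezoid_from_profile: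
  fixes \<theta> :: "real \<Rightarrow> real"
  assumes "a < b" "0 < d" "continuous_on {0..d} \<theta>" "\<theta> 0 = 0"
    "\<And>y. y \<in> {0<..d} \<Longrightarrow> \<theta> y < (b - a) / 2"
  defines "\<alpha> \<equiv> \<lambda>y. a + \<theta> y" and "\<beta> \<equiv> \<lambda>y. b - \<theta> y"
  shows "half_open_trapezoid (trapezoid_set 0 d \<alpha> \<beta>) 0 d \<alpha> \<beta>"
    and "has_base 0 \<alpha> \<beta> ({a<..<b} \<times> {0})"
proof -
  have "continuous_on {0<..d} \<theta>" using assms(3) by (rule continuous_on_subset) auto
  moreover have "\<alpha> y < \<beta> y" if "y \<in> {0<..d}" for y
    using assms(5)[OF that] by (simp add: \<alpha>_def \<beta>_def)
  ultimately show "half_open_trapezoid (trapezoid_set 0 d \<alpha> \<beta>) 0 d \<alpha> \<beta>"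
    unfolding half_open_trapezoid_def using assms(2)
    by (auto simp: \<alpha>_def \<beta>_def intro!: continuous_intros)
  have "(\<theta> \<longlongrightarrow> 0) (at_right 0)"
    using assms(3) \<open>0 < d\<close> unfolding continuous_on_def
    by (metis assms(4) at_within_Icc_at_right atLeastAtMost_iff order.refl less_imp_le)
  then have "(\<alpha> \<longlongrightarrow> a) (at_right 0)" "(\<beta> \<longlongrightarrow> b) (at_right 0)"
    unfolding \<alpha>_def \<beta>_def by (auto intro: tendsto_eq_intros)
  then show "has_base 0 \<alpha> \<beta> ({a<..<b} \<times> {0})"
    unfolding has_base_def using \<open>a < b\<close> by blast
qed

lemma segment_neighbourhood_distance:
  fixes a b :: real and U :: "(real \<times> real) set"
  assumes "openin (top_of_set ({a<..<b} \<times> {0} \<union> UNIV \<times> {0<..})) U"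
    and "{a<..<b} \<times> {0} \<subseteq> U"
  obtains q :: "real \<Rightarrow> real" where "1-lipschitz_on UNIV q" "\<And>u. u \<in> {a<..<b} \<Longrightarrow> 0 < q u"
    "\<And>x y. 0 < y \<Longrightarrow> y < q x \<Longrightarrow> (x, y) \<in> U"
proof -
  obtain V where V: "open V" "U = ({a<..<b} \<times> {0} \<union> UNIV \<times> {0<..}) \<inter> V"
    using assms(1) unfolding openin_open by blast
  \<comment> \<open>\<open>infdist\<close> to the empty set is \<open>0\<close>; the point below the axis keeps \<open>C\<close> nonempty\<close>
  define C where "C = insert (a, -1) (- V)"
  have C: "closed C" "C \<noteq> {}"
    unfolding C_def using V(1) by (auto intro!: closed_insert closed_Compl)
  define q where "q u = infdist (u, 0) C" for u
  show ?thesis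
  proof
    show "1-lipschitz_on UNIV q"
    proof (rule lipschitz_onI)
      fix x y :: real
      have "\<bar>infdist (x, 0) C - infdist (y, 0) C\<bar> \<le> dist (x, 0::real) (y, 0)"
        by (rule infdist_triangle_abs)
      then show "dist (q x) (q y) \<le> 1 * dist x y"
        by (simp add: q_def dist_real_def dist_Pair_Pair)
    qed simp
    fix u assume "u \<in> {a<..<b}"
    then have "(u, 0) \<notin> C" using assms(2) V(2) by (auto simp: C_def)
    then show "0 < q u" unfolding q_def using C by (rule infdist_pos_not_in_closed[rotated 2])
  next
    fix x y :: real assume "0 < y" "y < q x"
    have "(x, y) \<notin> C"
    proof
      assume "(x, y) \<in> C"
      then have "q x \<le> dist (x, 0) (x, y)" unfolding q_def by (rule infdist_le)
      with \<open>0 < y\<close> \<open>y < q x\<close> show False by (simp add: dist_Pair_Pair dist_real_def)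
    qed
    with \<open>0 < y\<close> show "(x, y) \<in> U" using V(2) by (auto simp: C_def)
  qed
qed

theorem lemma5p1:
  fixes a b :: real and U :: "(real \<times> real) set"
  assumes "a < b"
    and "openin (top_of_set ({a<..<b} \<times> {0} \<union> UNIV \<times> {0<..})) U"
    and "{a<..<b} \<times> {0} \<subseteq> U"
  shows "\<exists>T c d \<alpha> \<beta>. half_open_trapezoid T c d \<alpha> \<beta> \<and> T \<subseteq> U
            \<and> has_base c \<alpha> \<beta> ({a<..<b} \<times> {0})"
proof -
  obtain q where q: "1-lipschitz_on UNIV q" "\<And>u. u \<in> {a<..<b} \<Longrightarrow> 0 < q u"
    "\<And>x y. 0 < y \<Longrightarrow> y < q x \<Longrightarrow> (x, y) \<in> U"
    using segment_neighbourhood_distance[OF assms(2,3)] by blast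
  obtain d \<theta> where \<theta>: "0 < d" "continuous_on {0..d} \<theta>" "\<theta> 0 = 0"
    "\<And>y. y \<in> {0..d} \<Longrightarrow> \<theta> y < (b - a) / 2"
    "\<And>x y. y \<in> {0<..d} \<Longrightarrow> x \<in> {a + \<theta> y..b - \<theta> y} \<Longrightarrow> y < q x"
    using shrinking_profile_exists[OF assms(1) lipschitz_on_subset[OF q(1)] q(2)] by blast
  define \<alpha> where "\<alpha> y = a + \<theta> y" for y
  define \<beta> where "\<beta> y = b - \<theta> y" for y
  have "trapezoid_set 0 d \<alpha> \<beta> \<subseteq> U"
    using \<theta>(5) q(3) by (auto simp: trapezoid_set_def \<alpha>_def \<beta>_def)
  moreover have "half_open_trapezoid (trapezoid_set 0 d \<alpha> \<beta>) 0 d \<alpha> \<beta>"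
    "has_base 0 \<alpha> \<beta> ({a<..<b} \<times> {0})"
    using trapezoid_from_profile[OF assms(1) \<theta>(1-3)] \<theta>(4)
    unfolding \<alpha>_def[abs_def] \<beta>_def[abs_def] by auto
  ultimately show ?thesis by blast
qed

end
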